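(* Let $X$ be the weighted graph obtained as follows: start with $\mathbb N$ with edges $\{m,m+1\}$ of weight $1$; for every prime power $p^k$ ($p$ prime, $k\in\mathbb N$) attach at the vertex $p^k$ a cycle $G_p^k$ on $pk$ vertices (one vertex of the cycle identified with $p^k$, cycle edges of weight $1$); finally, between any two distinct vertices of $G_p^k$ add an edge of weight $p$. Equip $X$ with the weighted-graph metric. Then any two points of $X$ are connected by a $1$-path, $X$ is not coarsely equivalent to any metric space with bounded geometry, and $h_\infty(X)=0$.
   Context: The weighted distance between two vertices is the infimum over paths connecting them of the sum of the edge weights. A $\delta$-path is a sequence $(x_0,\dots,x_n)$ with $d(x_{i-1},x_i)\le\delta$. Bounded geometry: for every $r>0$ closed balls of radius $r$ have uniformly bounded cardinality. Coarse equivalence: a map $f$ with nondecreasing $\rho_\pm\colon[0,\infty)\to\mathbb R$, $\rho_-(r)\to\infty$, $\rho_-(d(x,x'))\le d(f(x),f(x'))\le\rho_+(d(x,x'))$, and coarsely dense image. Coarse entropy $h_\infty(X)=\lim_{\delta\to\infty}\lim_{R\to\infty}\limsup_{n\to\infty}\frac1n\log s(n,R,\delta,x_0)$, where $s(n,R,\delta,x_0)$ is the supremum of cardinalities of $R$-separated sets of $\delta$-paths of length $n$ starting at $x_0$, paths compared by $\max_i d(x_i,y_i)$. *)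

theory Defs
  imports "HOL-Analysis.Analysis" "HOL-Computational_Algebra.Primes"
    "HOL-Library.Extended_Real" "HOL-Library.Liminf_Limsup"
begin

text \<open>Vertices: the naturals (Nat m) and the extra cycle vertices (Cyc p k j), 0 < j < p*k,
  of the cycle G attached at p^k.  Vertex j = 0 of that cycle is identified with Nat (p^k).
  The type contains junk vertices; the vertex set of X is the carrier Xv.\<close>

datatype vert = Nat nat | Cyc nat nat nat

definition cv :: "nat \<Rightarrow> nat \<Rightarrow> nat \<Rightarrow> vert" where
  "cv p k j = (if j = 0 then Nat (p ^ k) else Cyc p k j)"

definition Xv :: "vert set" where
  "Xv = range Nat \<union> {Cyc p k j | p k j. prime p \<and> 1 \<le> k \<and> 0 < j \<and> j < p * k}"

inductive edge0 :: "vert \<Rightarrow> vert \<Rightarrow> real \<Rightarrow> bool" where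
  line: "edge0 (Nat m) (Nat (Suc m)) 1"
| cyc: "prime p \<Longrightarrow> 1 \<le> k \<Longrightarrow> j < p * k \<Longrightarrow>
          edge0 (cv p k j) (cv p k ((j + 1) mod (p * k))) 1"
| compl: "prime p \<Longrightarrow> 1 \<le> k \<Longrightarrow> i < p * k \<Longrightarrow> j < p * k \<Longrightarrow> i \<noteq> j \<Longrightarrow>
          edge0 (cv p k i) (cv p k j) (real p)"

definition edge :: "vert \<Rightarrow> vert \<Rightarrow> real \<Rightarrow> bool" where
  "edge x y w \<longleftrightarrow> edge0 x y w \<or> edge0 y x w"

inductive wwalk :: "vert \<Rightarrow> vert \<Rightarrow> real \<Rightarrow> bool" where
  refl: "wwalk x x 0"
| step: "edge x z a \<Longrightarrow> wwalk z y c \<Longrightarrow> wwalk x y (a + c)"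

definition gdist :: "vert \<Rightarrow> vert \<Rightarrow> real" where
  "gdist x y = Inf {c. wwalk x y c}"

definition metric_on :: "'a set \<Rightarrow> ('a \<Rightarrow> 'a \<Rightarrow> real) \<Rightarrow> bool" where
  "metric_on S d \<longleftrightarrow> (\<forall>x\<in>S. \<forall>y\<in>S. 0 \<le> d x y \<and> (d x y = 0 \<longleftrightarrow> x = y) \<and> d x y = d y x) \<and>
     (\<forall>x\<in>S. \<forall>y\<in>S. \<forall>z\<in>S. d x z \<le> d x y + d y z)"

definition chain_connected :: "'a set \<Rightarrow> ('a \<Rightarrow> 'a \<Rightarrow> real) \<Rightarrow> real \<Rightarrow> bool" where
  "chain_connected S d \<delta> \<longleftrightarrow> (\<forall>x\<in>S. \<forall>y\<in>S. \<exists>xs. xs \<noteq> [] \<and> set xs \<subseteq> S \<and> hd xs = x \<and> last xs = y \<and>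
      (\<forall>i. Suc i < length xs \<longrightarrow> d (xs ! i) (xs ! Suc i) \<le> \<delta>))"

definition bounded_geometry :: "'a set \<Rightarrow> ('a \<Rightarrow> 'a \<Rightarrow> real) \<Rightarrow> bool" where
  "bounded_geometry S d \<longleftrightarrow> (\<forall>r>0. \<exists>N::nat. \<forall>y\<in>S.
      finite {z\<in>S. d y z \<le> r} \<and> card {z\<in>S. d y z \<le> r} \<le> N)"

definition coarse_equivalence ::
  "'a set \<Rightarrow> ('a \<Rightarrow> 'a \<Rightarrow> real) \<Rightarrow> 'b set \<Rightarrow> ('b \<Rightarrow> 'b \<Rightarrow> real) \<Rightarrow> ('a \<Rightarrow> 'b) \<Rightarrow> bool" where
  "coarse_equivalence S d T e f \<longleftrightarrow> f ` S \<subseteq> T \<and>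
     (\<exists>\<rho>m \<rho>p :: real \<Rightarrow> real. mono_on {0..} \<rho>m \<and> mono_on {0..} \<rho>p \<and> filterlim \<rho>m at_top at_top \<and>
        (\<forall>x\<in>S. \<forall>x'\<in>S. \<rho>m (d x x') \<le> e (f x) (f x') \<and> e (f x) (f x') \<le> \<rho>p (d x x'))) \<and>
     (\<exists>C. \<forall>y\<in>T. \<exists>x\<in>S. e y (f x) \<le> C)"

definition delta_paths :: "'a set \<Rightarrow> ('a \<Rightarrow> 'a \<Rightarrow> real) \<Rightarrow> real \<Rightarrow> nat \<Rightarrow> 'a \<Rightarrow> 'a list set" where
  "delta_paths S d \<delta> n x0 = {xs. length xs = Suc n \<and> set xs \<subseteq> S \<and> hd xs = x0 \<and>
      (\<forall>i<n. d (xs ! i) (xs ! Suc i) \<le> \<delta>)}"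

definition path_dist :: "('a \<Rightarrow> 'a \<Rightarrow> real) \<Rightarrow> 'a list \<Rightarrow> 'a list \<Rightarrow> real" where
  "path_dist d xs ys = Max {d (xs ! i) (ys ! i) | i. i < length xs}"

definition separated_paths :: "('a \<Rightarrow> 'a \<Rightarrow> real) \<Rightarrow> real \<Rightarrow> 'a list set \<Rightarrow> bool" where
  "separated_paths d R P \<longleftrightarrow> (\<forall>xs\<in>P. \<forall>ys\<in>P. xs \<noteq> ys \<longrightarrow> R \<le> path_dist d xs ys)"

definition sep_count :: "'a set \<Rightarrow> ('a \<Rightarrow> 'a \<Rightarrow> real) \<Rightarrow> nat \<Rightarrow> real \<Rightarrow> real \<Rightarrow> 'a \<Rightarrow> ereal" where
  "sep_count S d n R \<delta> x0 = Sup {ereal (real (card P)) | P. finite P \<and> P \<subseteq> delta_paths S d \<delta> n x0 \<and>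
      separated_paths d R P}"

definition elog :: "ereal \<Rightarrow> ereal" where
  "elog s = (if s = \<infinity> then \<infinity> else ereal (ln (real_of_ereal s)))"

definition coarse_entropy :: "'a set \<Rightarrow> ('a \<Rightarrow> 'a \<Rightarrow> real) \<Rightarrow> 'a \<Rightarrow> ereal" where
  "coarse_entropy S d x0 = Lim at_top (\<lambda>\<delta>::real. Lim at_top (\<lambda>R::real.
      limsup (\<lambda>n. ereal (1 / real n) * elog (sep_count S d n R \<delta> x0))))"

end

theory Submission
  imports Defs "HOL-Real_Asymp.Real_Asymp"
begin

text \<open>All edge weights are at least 1, so gdist is a genuine metric, and the unit edges of \<nat> and
  of the cycles join every vertex to 0 by a 1-path.

  The vertices p t (1 \<le> t < k) of G_p^k are all at distance p from p^k, but pairwise at distance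
  at least p: the function min p (cycle distance to a fixed vertex of G_p^k) changes by at most the
  weight along every edge, hence bounds gdist from below. For a prime p beyond the scale where the
  lower control function of a coarse equivalence exceeds 1, these k - 1 points have distinct
  images inside one ball of radius \<rho>+(p), for every k; this contradicts bounded geometry.

  For the entropy, label the vertices at scale B: by the B-block of their foot in \<nat> (for \<nat> and
  the cycles with p \<le> B, which lie within distance B of their foot), and by (p, k, B-block of the
  cycle index) for p > B. Equal labels force distance at most 3B, and a vertex within distance B
  of a given one has one of at most 18B + 3 labels, because only 3B prime powers lie in three
  adjacent blocks. Sampling a \<delta>-path every L \<approx> R/(10\<delta>) steps, an R-separated family of
  \<delta>-paths is determined by its label sequences, so s(n,R,\<delta>) \<le> (18B + 3)^(n/L) with
  B \<approx> R/5, and the entropy is at most 10 \<delta> ln(4R)/R \<rightarrow> 0.\<close>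

section \<open>\<delta>-chains and an obstruction to bounded geometry\<close>

lemma metric_onD:
  assumes "metric_on S d" "x \<in> S" "y \<in> S"
  shows "0 \<le> d x y" "d x y = d y x"
  using assms unfolding metric_on_def by auto

lemma metric_on_self: "metric_on S d \<Longrightarrow> x \<in> S \<Longrightarrow> d x x = 0"
  unfolding metric_on_def by auto

lemma metric_on_triangle:
  assumes "metric_on S d" "x \<in> S" "y \<in> S" "z \<in> S"
  shows "d x z \<le> d x y + d y z"
  using assms unfolding metric_on_def by blast

inductive delta_chain :: "'a set \<Rightarrow> ('a \<Rightarrow> 'a \<Rightarrow> real) \<Rightarrow> real \<Rightarrow> 'a \<Rightarrow> 'a \<Rightarrow> bool"
  for S d \<delta> where
  refl: "x \<in> S \<Longrightarrow> delta_chain S d \<delta> x x"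
| step: "x \<in> S \<Longrightarrow> d x y \<le> \<delta> \<Longrightarrow> delta_chain S d \<delta> y z \<Longrightarrow> delta_chain S d \<delta> x z"

lemma delta_chain_in: "delta_chain S d \<delta> x y \<Longrightarrow> x \<in> S \<and> y \<in> S"
  by (induction rule: delta_chain.induct) auto

lemma delta_chain_trans: "delta_chain S d \<delta> x y \<Longrightarrow> delta_chain S d \<delta> y z \<Longrightarrow> delta_chain S d \<delta> x z"
  by (induction rule: delta_chain.induct) (auto intro: delta_chain.step)

lemma delta_chain_single: "x \<in> S \<Longrightarrow> y \<in> S \<Longrightarrow> d x y \<le> \<delta> \<Longrightarrow> delta_chain S d \<delta> x y"
  by (blast intro: delta_chain.intros)

lemma delta_chain_sym:
  assumes sym: "\<And>x y. x \<in> S \<Longrightarrow> y \<in> S \<Longrightarrow> d x y = d y x"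
  shows "delta_chain S d \<delta> x y \<Longrightarrow> delta_chain S d \<delta> y x"
proof (induction rule: delta_chain.induct)
  case (refl x)
  then show ?case by (rule delta_chain.refl)
next
  case (step x y z)
  then have "delta_chain S d \<delta> y x"
    using delta_chain_in[OF step.hyps(3)] sym[of x y] by (intro delta_chain_single) auto
  with step.IH show ?case by (rule delta_chain_trans)
qed

lemma delta_chain_list:
  "delta_chain S d \<delta> x y \<Longrightarrow> \<exists>xs. xs \<noteq> [] \<and> set xs \<subseteq> S \<and> hd xs = x \<and> last xs = y \<and>
     (\<forall>i. Suc i < length xs \<longrightarrow> d (xs ! i) (xs ! Suc i) \<le> \<delta>)"
proof (induction rule: delta_chain.induct)
  case (refl x)
  then show ?case by (intro exI[of _ "[x]"]) auto
next
  case (step x y z)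
  then obtain xs where xs: "xs \<noteq> []" "set xs \<subseteq> S" "hd xs = y" "last xs = z"
    "\<forall>i. Suc i < length xs \<longrightarrow> d (xs ! i) (xs ! Suc i) \<le> \<delta>" by blast
  have "\<forall>i. Suc i < length (x # xs) \<longrightarrow> d ((x # xs) ! i) ((x # xs) ! Suc i) \<le> \<delta>"
  proof (intro allI impI)
    fix i assume "Suc i < length (x # xs)"
    then show "d ((x # xs) ! i) ((x # xs) ! Suc i) \<le> \<delta>"
      using xs step.hyps(2) by (cases i) (auto simp: hd_conv_nth)
  qed
  with xs step.hyps(1) show ?case by (intro exI[of _ "x # xs"]) simp
qed

lemma chain_connectedI:
  assumes sym: "\<And>x y. x \<in> S \<Longrightarrow> y \<in> S \<Longrightarrow> d x y = d y x"
    and to_base: "\<And>x. x \<in> S \<Longrightarrow> delta_chain S d \<delta> x x0"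
  shows "chain_connected S d \<delta>"
  unfolding chain_connected_def
proof (intro ballI)
  fix x y assume "x \<in> S" "y \<in> S"
  then have "delta_chain S d \<delta> x y"
    using delta_chain_trans[OF to_base delta_chain_sym[OF sym to_base]] by blast
  then show "\<exists>xs. xs \<noteq> [] \<and> set xs \<subseteq> S \<and> hd xs = x \<and> last xs = y \<and>
      (\<forall>i. Suc i < length xs \<longrightarrow> d (xs ! i) (xs ! Suc i) \<le> \<delta>)"
    by (rule delta_chain_list)
qed

lemma not_coarse_equivalence_bounded_geometry:
  assumes d: "metric_on S d" and e: "metric_on Y e" and bg: "bounded_geometry Y e"
    and clusters: "\<And>s0. \<exists>s\<ge>s0. \<forall>N. \<exists>c\<in>S. \<exists>A\<subseteq>S. finite A \<and> N < card A \<and>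
        (\<forall>a\<in>A. d c a \<le> s) \<and> (\<forall>a\<in>A. \<forall>b\<in>A. a \<noteq> b \<longrightarrow> s \<le> d a b)"
  shows "\<not> coarse_equivalence S d Y e f"
proof
  assume "coarse_equivalence S d Y e f"
  then obtain \<rho>m \<rho>p where fY: "f ` S \<subseteq> Y" and mono: "mono_on {0..} \<rho>p"
    and lim: "filterlim \<rho>m at_top at_top"
    and bounds: "\<forall>x\<in>S. \<forall>x'\<in>S. \<rho>m (d x x') \<le> e (f x) (f x') \<and> e (f x) (f x') \<le> \<rho>p (d x x')"
    unfolding coarse_equivalence_def by blast
  from lim have "eventually (\<lambda>x. \<rho>m x \<ge> 1) at_top"
    by (simp add: filterlim_at_top)
  then obtain s0 where s0: "\<And>x. x \<ge> s0 \<Longrightarrow> \<rho>m x \<ge> 1"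
    by (auto simp: eventually_at_top_linorder)
  obtain s where "s \<ge> s0" and cl: "\<forall>N. \<exists>c\<in>S. \<exists>A\<subseteq>S. finite A \<and> N < card A \<and>
      (\<forall>a\<in>A. d c a \<le> s) \<and> (\<forall>a\<in>A. \<forall>b\<in>A. a \<noteq> b \<longrightarrow> s \<le> d a b)"
    using clusters[of s0] by (elim exE conjE)
  define r where "r = max 1 (\<rho>p s)"
  have "r > 0" unfolding r_def by simp
  with bg obtain N where N: "\<forall>y\<in>Y. finite {z\<in>Y. e y z \<le> r} \<and> card {z\<in>Y. e y z \<le> r} \<le> N"
    unfolding bounded_geometry_def by blast
  from cl[rule_format, of N] obtain c A where c: "c \<in> S" and A: "A \<subseteq> S" "finite A" "N < card A"
    and near: "\<forall>a\<in>A. d c a \<le> s" and far: "\<forall>a\<in>A. \<forall>b\<in>A. a \<noteq> b \<longrightarrow> s \<le> d a b"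
    by (elim bexE exE conjE)
  have "inj_on f A"
  proof (rule inj_onI, rule ccontr)
    fix a b assume ab: "a \<in> A" "b \<in> A" "f a = f b" "a \<noteq> b"
    have "s \<le> d a b" using far ab by blast
    then have "1 \<le> \<rho>m (d a b)" using s0 \<open>s \<ge> s0\<close> by simp
    also have "\<dots> \<le> e (f a) (f b)" using bounds A ab by blast
    also have "\<dots> = 0" using metric_on_self[OF e] ab fY A by auto
    finally show False by simp
  qed
  moreover have "f ` A \<subseteq> {z\<in>Y. e (f c) z \<le> r}"
  proof safe
    fix a assume a: "a \<in> A"
    then show "f a \<in> Y" using fY A by auto
    have "e (f c) (f a) \<le> \<rho>p (d c a)" using bounds c a A by blast
    also have "\<dots> \<le> \<rho>p s"
    proof (rule mono_onD[OF mono])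
      show "d c a \<le> s" using near a by blast
      then show "d c a \<in> {0..}" "s \<in> {0..}" using metric_onD(1)[OF d c, of a] a A by auto
    qed
    finally show "e (f c) (f a) \<le> r" unfolding r_def by simp
  qed
  moreover have "f c \<in> Y" using fY c by auto
  ultimately have "card A \<le> card {z\<in>Y. e (f c) z \<le> r}"
    using N card_image[of f A] card_mono by metis
  also have "\<dots> \<le> N" using N \<open>f c \<in> Y\<close> by blast
  finally show False using A by simp
qed


section \<open>Counting separated families of paths\<close>

lemma delta_path_nth_in:
  "xs \<in> delta_paths S d \<delta> n x0 \<Longrightarrow> i \<le> n \<Longrightarrow> xs ! i \<in> S"
  unfolding delta_paths_def by (auto intro: nth_mem)

lemma delta_path_nth_0: "xs \<in> delta_paths S d \<delta> n x0 \<Longrightarrow> xs ! 0 = x0"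
  unfolding delta_paths_def by (cases xs) auto

lemma delta_path_dist:
  assumes d: "metric_on S d" and xs: "xs \<in> delta_paths S d \<delta> n x0" and "i \<le> j" "j \<le> n"
  shows "d (xs ! i) (xs ! j) \<le> real (j - i) * \<delta>"
  using assms(3,4)
proof (induction j)
  case 0
  then show ?case using metric_on_self[OF d] delta_path_nth_in[OF xs] by simp
next
  case (Suc j)
  show ?case
  proof (cases "i = Suc j")
    case True
    then show ?thesis using metric_on_self[OF d] delta_path_nth_in[OF xs] Suc.prems by simp
  next
    case False
    then have ij: "i \<le> j" using Suc.prems by simp
    have "d (xs ! i) (xs ! Suc j) \<le> d (xs ! i) (xs ! j) + d (xs ! j) (xs ! Suc j)"
      using Suc.prems ij by (intro metric_on_triangle[OF d] delta_path_nth_in[OF xs]) auto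
    also have "\<dots> \<le> real (j - i) * \<delta> + \<delta>"
      using Suc xs ij unfolding delta_paths_def by (intro add_mono) auto
    also have "\<dots> = real (Suc j - i) * \<delta>" using ij by (simp add: of_nat_diff algebra_simps)
    finally show ?thesis .
  qed
qed

definition label_chains :: "('l \<Rightarrow> 'l set) \<Rightarrow> 'l \<Rightarrow> nat \<Rightarrow> 'l list set" where
  "label_chains N a K = {ls. length ls = Suc K \<and> ls ! 0 = a \<and> (\<forall>t<K. ls ! Suc t \<in> N (ls ! t))}"

lemma card_label_chains:
  assumes "\<And>l. finite (N l)" "\<And>l. card (N l) \<le> M"
  shows "finite (label_chains N a K) \<and> card (label_chains N a K) \<le> M ^ K"
proof (induction K arbitrary: a)
  case 0
  have "label_chains N a 0 = {[a]}"
    by (auto simp: label_chains_def length_Suc_conv)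
  then show ?case by simp
next
  case (Suc K)
  define U where "U = (\<Union>l\<in>N a. label_chains N l K)"
  have sub: "label_chains N a (Suc K) \<subseteq> (\<lambda>ls. a # ls) ` U"
  proof
    fix ls assume "ls \<in> label_chains N a (Suc K)"
    then have len: "length ls = Suc (Suc K)" and "ls ! 0 = a"
      and hs: "\<forall>t<Suc K. ls ! Suc t \<in> N (ls ! t)"
      unfolding label_chains_def by auto
    then obtain l ls' where ls: "ls = a # l # ls'"
      by (cases ls; cases "tl ls") auto
    have "l \<in> N a" using hs ls by auto
    moreover have "l # ls' \<in> label_chains N l K"
      using len hs ls unfolding label_chains_def by auto
    ultimately show "ls \<in> (\<lambda>ls. a # ls) ` U" using ls U_def by blast
  qed
  have U: "finite U" "card U \<le> M * M ^ K"
  proof -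
    show "finite U" using Suc.IH assms(1) by (simp add: U_def)
    have "card U \<le> (\<Sum>l\<in>N a. card (label_chains N l K))"
      unfolding U_def using assms(1) by (rule card_UN_le)
    also have "\<dots> \<le> (\<Sum>l\<in>N a. M ^ K)" using Suc.IH by (intro sum_mono) blast
    also have "\<dots> \<le> M * M ^ K" using assms(2)[of a] by simp
    finally show "card U \<le> M * M ^ K" .
  qed
  have "card (label_chains N a (Suc K)) \<le> card U"
    using order_trans[OF card_mono[OF finite_imageI[OF U(1)] sub] card_image_le[OF U(1)]] .
  then show ?case using finite_subset[OF sub finite_imageI[OF U(1)]] U(2) by simp
qed

lemma delta_path_dist_less:
  assumes "metric_on S d" "xs \<in> delta_paths S d \<delta> n x0" "0 \<le> \<delta>" "real L * \<delta> < B"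
    and "i \<le> j" "j \<le> n" "j - i \<le> L"
  shows "d (xs ! i) (xs ! j) < B"
proof -
  have "d (xs ! i) (xs ! j) \<le> real (j - i) * \<delta>" using delta_path_dist assms(1,2,5,6) .
  also have "\<dots> \<le> real L * \<delta>" using assms(3,7) by (intro mult_right_mono) auto
  finally show ?thesis using assms(4) by linarith
qed

definition sampled_labels :: "('a \<Rightarrow> 'l) \<Rightarrow> nat \<Rightarrow> nat \<Rightarrow> 'a list \<Rightarrow> 'l list" where
  "sampled_labels lab L K xs = map (\<lambda>t. lab (xs ! (t * L))) [0..<Suc K]"

lemma sampled_labels_nth: "t \<le> K \<Longrightarrow> sampled_labels lab L K xs ! t = lab (xs ! (t * L))"
  unfolding sampled_labels_def by (simp del: upt_Suc add: nth_upt)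

lemma sampled_labels_mem_label_chains:
  assumes d: "metric_on S d" and xs: "xs \<in> delta_paths S d \<delta> n x0"
    and "0 \<le> \<delta>" "real L * \<delta> < B"
    and nbhd: "\<And>x y. x \<in> S \<Longrightarrow> y \<in> S \<Longrightarrow> d x y < B \<Longrightarrow> lab y \<in> N (lab x)"
  shows "sampled_labels lab L (n div L) xs \<in> label_chains N (lab x0) (n div L)"
  unfolding label_chains_def
proof (intro CollectI conjI allI impI)
  show "length (sampled_labels lab L (n div L) xs) = Suc (n div L)"
    by (simp add: sampled_labels_def)
  show "sampled_labels lab L (n div L) xs ! 0 = lab x0"
    using sampled_labels_nth[of 0 "n div L" lab L xs] delta_path_nth_0[OF xs] by simp
  fix t assume "t < n div L"
  then have "Suc t * L \<le> n div L * L" by (intro mult_le_mono1) simp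
  then have "Suc t * L \<le> n" using div_times_less_eq_dividend[of n L] by linarith
  then have "lab (xs ! (Suc t * L)) \<in> N (lab (xs ! (t * L)))"
    using delta_path_dist_less[OF d xs assms(3,4), of "t * L" "Suc t * L"] delta_path_nth_in[OF xs]
    by (intro nbhd) auto
  then show "sampled_labels lab L (n div L) xs ! Suc t \<in> N (sampled_labels lab L (n div L) xs ! t)"
    using \<open>t < n div L\<close> sampled_labels_nth[of "Suc t" "n div L" lab L xs]
      sampled_labels_nth[of t "n div L" lab L xs] by simp
qed

text \<open>Every point of a \<delta>-path lies within L steps, hence within distance B, of the last sampling
  time, so paths with equal sampled labels stay within D + 2B of each other.\<close>
lemma dist_less_of_sampled_labels_eq:
  assumes d: "metric_on S d" and xs: "xs \<in> delta_paths S d \<delta> n x0" and ys: "ys \<in> delta_paths S d \<delta> n x0"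
    and "0 \<le> \<delta>" "0 < L" "real L * \<delta> < B" "D + 2 * B \<le> R"
    and diam: "\<And>x y. x \<in> S \<Longrightarrow> y \<in> S \<Longrightarrow> lab x = lab y \<Longrightarrow> d x y \<le> D"
    and eq: "sampled_labels lab L (n div L) xs = sampled_labels lab L (n div L) ys" and i: "i \<le> n"
  shows "d (xs ! i) (ys ! i) < R"
proof -
  define j where "j = i div L * L"
  have "i - j = i mod L" by (simp add: j_def minus_div_mult_eq_mod)
  then have j: "j \<le> i" "i - j \<le> L" "i div L \<le> n div L"
    using \<open>0 < L\<close> i unfolding j_def by (auto simp: div_times_less_eq_dividend less_imp_le div_le_mono)
  have in_S: "xs ! j \<in> S" "ys ! j \<in> S" "xs ! i \<in> S" "ys ! i \<in> S"
    using delta_path_nth_in[OF xs] delta_path_nth_in[OF ys] j(1) i by auto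
  have "lab (xs ! j) = lab (ys ! j)"
    using eq sampled_labels_nth[OF j(3), of lab L xs] sampled_labels_nth[OF j(3), of lab L ys]
    by (simp add: j_def)
  then have "d (xs ! j) (ys ! j) \<le> D" using diam in_S by blast
  moreover have "d (xs ! i) (xs ! j) < B" "d (ys ! j) (ys ! i) < B"
    using delta_path_dist_less[OF d xs assms(4,6) j(1) i j(2)]
      delta_path_dist_less[OF d ys assms(4,6) j(1) i j(2)] metric_onD(2)[OF d in_S(1,3)]
    by auto
  moreover have "d (xs ! i) (ys ! i) \<le> d (xs ! i) (xs ! j) + d (xs ! j) (ys ! j) + d (ys ! j) (ys ! i)"
    using metric_on_triangle[OF d in_S(3,1,4)] metric_on_triangle[OF d in_S(1,2,4)] by linarith
  ultimately show ?thesis using \<open>D + 2 * B \<le> R\<close> by linarith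
qed

text \<open>Sampling the labels of a path every L steps is injective on an R-separated family.\<close>
lemma card_separated_delta_paths_le:
  assumes d: "metric_on S d" and "0 \<le> \<delta>" "0 < L" "real L * \<delta> < B" "D + 2 * B \<le> R"
    and diam: "\<And>x y. x \<in> S \<Longrightarrow> y \<in> S \<Longrightarrow> lab x = lab y \<Longrightarrow> d x y \<le> D"
    and nbhd: "\<And>x y. x \<in> S \<Longrightarrow> y \<in> S \<Longrightarrow> d x y < B \<Longrightarrow> lab y \<in> N (lab x)"
    and N: "\<And>l. finite (N l)" "\<And>l. card (N l) \<le> M"
    and P: "finite P" "P \<subseteq> delta_paths S d \<delta> n x0" "separated_paths d R P"
  shows "card P \<le> M ^ (n div L)"
proof -
  define sig where "sig = sampled_labels lab L (n div L)"
  have "inj_on sig P"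
  proof (rule inj_onI, rule ccontr)
    fix xs ys assume "xs \<in> P" "ys \<in> P" "sig xs = sig ys" "xs \<noteq> ys"
    then have xs: "xs \<in> delta_paths S d \<delta> n x0" and ys: "ys \<in> delta_paths S d \<delta> n x0"
      and "R \<le> path_dist d xs ys" using P unfolding separated_paths_def by auto
    moreover have "{d (xs ! i) (ys ! i) | i. i < length xs} = (\<lambda>i. d (xs ! i) (ys ! i)) ` {..n}"
      using xs unfolding delta_paths_def by auto
    moreover have "(MAX i\<in>{..n}. d (xs ! i) (ys ! i)) < R"
      using dist_less_of_sampled_labels_eq[OF d xs ys assms(2-5) diam] \<open>sig xs = sig ys\<close>
      by (subst Max_less_iff) (auto simp: sig_def)
    ultimately show False by (simp add: path_dist_def)
  qed
  moreover have "sig ` P \<subseteq> label_chains N (lab x0) (n div L)"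
    using sampled_labels_mem_label_chains[where lab = lab and N = N, OF d _ assms(2,4) nbhd] P(2)
    by (auto simp: sig_def)
  moreover note card_label_chains[where N = N and M = M and a = "lab x0" and K = "n div L", OF N]
  ultimately have "card (sig ` P) \<le> M ^ (n div L)"
    using card_mono[of "label_chains N (lab x0) (n div L)" "sig ` P"] by linarith
  then show ?thesis using card_image[OF \<open>inj_on sig P\<close>] by simp
qed

lemma sep_count_le_of_labelling:
  assumes d: "metric_on S d" and "0 \<le> \<delta>" "0 < L" "real L * \<delta> < B" "D + 2 * B \<le> R"
    and diam: "\<And>x y. x \<in> S \<Longrightarrow> y \<in> S \<Longrightarrow> lab x = lab y \<Longrightarrow> d x y \<le> D"
    and nbhd: "\<And>x y. x \<in> S \<Longrightarrow> y \<in> S \<Longrightarrow> d x y < B \<Longrightarrow> lab y \<in> N (lab x)"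
    and N: "\<And>l. finite (N l)" "\<And>l. card (N l) \<le> M"
  shows "sep_count S d n R \<delta> x0 \<le> ereal (real (M ^ (n div L)))"
  unfolding sep_count_def
proof (rule Sup_least, clarify)
  fix P assume "finite P" "P \<subseteq> delta_paths S d \<delta> n x0" "separated_paths d R P"
  then have "card P \<le> M ^ (n div L)"
    using assms by (intro card_separated_delta_paths_le[where lab = lab and N = N]) auto
  then show "ereal (real (card P)) \<le> ereal (real (M ^ (n div L)))" by simp
qed

lemma one_le_sep_count:
  assumes "metric_on S d" "x0 \<in> S" "0 \<le> \<delta>"
  shows "1 \<le> sep_count S d n R \<delta> x0"
proof -
  have "{replicate (Suc n) x0} \<subseteq> delta_paths S d \<delta> n x0"
    using assms metric_on_self[OF assms(1,2)] by (auto simp: delta_paths_def simp del: replicate_Suc)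
  then have "ereal (real (card {replicate (Suc n) x0})) \<le> sep_count S d n R \<delta> x0"
    unfolding sep_count_def separated_paths_def by (intro Sup_upper) blast
  then show ?thesis by (simp add: one_ereal_def)
qed

section \<open>A criterion for vanishing coarse entropy\<close>

lemma entropy_term_le:
  assumes "1 \<le> s" "s \<le> ereal (exp (real n * c))" "0 \<le> c"
  shows "0 \<le> ereal (1 / real n) * elog s \<and> ereal (1 / real n) * elog s \<le> ereal c"
proof -
  obtain r where r: "s = ereal r" "1 \<le> r" "r \<le> exp (real n * c)"
    using assms by (cases s) auto
  then have "0 \<le> ln r" "ln r \<le> real n * c" using ln_mono[of r "exp (real n * c)"] by auto
  moreover have "ln r / real n \<le> c" if "real n * c \<ge> ln r"
    using that \<open>0 \<le> c\<close> by (cases "n = 0") (simp_all add: pos_divide_le_eq mult.commute)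
  ultimately show ?thesis using r by (simp add: elog_def)
qed

lemma limsup_entropy_terms_le:
  assumes d: "metric_on S d" and x0: "x0 \<in> S" and "1 \<le> \<delta>"
    and bound: "\<forall>n. sep_count S d n R \<delta> x0 \<le> ereal (exp (real n * c))"
  shows "0 \<le> limsup (\<lambda>n. ereal (1 / real n) * elog (sep_count S d n R \<delta> x0)) \<and>
    limsup (\<lambda>n. ereal (1 / real n) * elog (sep_count S d n R \<delta> x0)) \<le> ereal c"
proof -
  have "1 \<le> ereal (exp c)"
    using order_trans[OF one_le_sep_count[OF d x0] bound[rule_format, of 1]] \<open>1 \<le> \<delta>\<close> by simp
  then have "0 \<le> c" by (simp add: one_ereal_def)
  then have terms: "0 \<le> ereal (1 / real n) * elog (sep_count S d n R \<delta> x0) \<and>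
      ereal (1 / real n) * elog (sep_count S d n R \<delta> x0) \<le> ereal c" for n
    using entropy_term_le[OF one_le_sep_count[OF d x0] bound[rule_format]] \<open>1 \<le> \<delta>\<close> by simp
  show ?thesis
  proof
    show "0 \<le> limsup (\<lambda>n. ereal (1 / real n) * elog (sep_count S d n R \<delta> x0))"
      by (rule le_Limsup) (use terms in \<open>simp_all add: always_eventually\<close>)
    show "limsup (\<lambda>n. ereal (1 / real n) * elog (sep_count S d n R \<delta> x0)) \<le> ereal c"
      by (rule Limsup_bounded) (use terms in \<open>simp add: always_eventually\<close>)
  qed
qed

lemma coarse_entropy_eq_0I:
  assumes d: "metric_on S d" and x0: "x0 \<in> S"
    and bound: "\<And>\<delta>. 1 \<le> \<delta> \<Longrightarrow> eventually (\<lambda>R. \<forall>n. sep_count S d n R \<delta> x0 \<le> ereal (exp (real n * g \<delta> R))) at_top"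
    and g: "\<And>\<delta>. 1 \<le> \<delta> \<Longrightarrow> (g \<delta> \<longlongrightarrow> 0) at_top"
  shows "coarse_entropy S d x0 = 0"
proof -
  define h where "h \<delta> R = limsup (\<lambda>n. ereal (1 / real n) * elog (sep_count S d n R \<delta> x0))" for \<delta> R
  have inner: "(h \<delta> \<longlongrightarrow> 0) at_top" if "1 \<le> \<delta>" for \<delta>
  proof (rule tendsto_sandwich)
    have ev: "eventually (\<lambda>R. 0 \<le> h \<delta> R \<and> h \<delta> R \<le> ereal (g \<delta> R)) at_top"
      using bound[OF that] by (rule eventually_mono) (unfold h_def, rule limsup_entropy_terms_le[OF d x0 that])
    show "eventually (\<lambda>R. 0 \<le> h \<delta> R) at_top" using ev by (rule eventually_mono) blast
    show "eventually (\<lambda>R. h \<delta> R \<le> ereal (g \<delta> R)) at_top" using ev by (rule eventually_mono) blast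
    show "((\<lambda>R. 0) \<longlongrightarrow> 0) at_top" by simp
    show "((\<lambda>R. ereal (g \<delta> R)) \<longlongrightarrow> 0) at_top"
      using tendsto_ereal[OF g[OF that]] by (simp add: zero_ereal_def)
  qed
  have "eventually (\<lambda>\<delta>. Lim at_top (h \<delta>) = 0) at_top"
    using eventually_ge_at_top[of "1::real"]
    by (rule eventually_mono) (rule tendsto_Lim[OF _ inner], simp_all)
  then have "((\<lambda>\<delta>. Lim at_top (h \<delta>)) \<longlongrightarrow> 0) at_top"
    by (rule tendsto_eventually)
  then show ?thesis unfolding coarse_entropy_def h_def[abs_def] by (rule tendsto_Lim[rotated]) simp
qed

section \<open>The weighted graph metric\<close>

lemma edge0_weight_ge_1: "edge0 x y w \<Longrightarrow> 1 \<le> w"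
  by (induction rule: edge0.induct) (simp_all add: Suc_le_eq prime_gt_0_nat)

lemma edge_weight_ge_1: "edge x y w \<Longrightarrow> 1 \<le> w"
  unfolding edge_def using edge0_weight_ge_1 by blast

lemma edge_sym: "edge x y w \<Longrightarrow> edge y x w"
  unfolding edge_def by blast

lemma wwalk_nonneg: "wwalk x y c \<Longrightarrow> 0 \<le> c"
  by (induction rule: wwalk.induct) (auto dest: edge_weight_ge_1)

lemma wwalk_ge_1: "wwalk x y c \<Longrightarrow> x \<noteq> y \<Longrightarrow> 1 \<le> c"
proof (induction rule: wwalk.induct)
  case (step x z a y c)
  then show ?case using edge_weight_ge_1[OF step(1)] wwalk_nonneg[OF step(2)] by linarith
qed simp

lemma wwalk_edge: "edge x y w \<Longrightarrow> wwalk x y w"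
  using wwalk.step[OF _ wwalk.refl] by fastforce

lemma wwalk_trans: "wwalk x y a \<Longrightarrow> wwalk y z b \<Longrightarrow> wwalk x z (a + b)"
proof (induction x y a arbitrary: b rule: wwalk.induct)
  case (refl x)
  then show ?case by simp
next
  case (step x z a y c)
  from wwalk.step[OF step(1) step.IH[OF step.prems]] show ?case
    by (simp add: add.assoc)
qed

lemma wwalk_sym: "wwalk x y c \<Longrightarrow> wwalk y x c"
proof (induction rule: wwalk.induct)
  case (refl x)
  then show ?case by (rule wwalk.refl)
next
  case (step x z a y c)
  from wwalk_trans[OF step.IH wwalk_edge[OF edge_sym[OF step(1)]]] show ?case
    by (simp add: add.commute)
qed

lemma gdist_le: "wwalk x y c \<Longrightarrow> gdist x y \<le> c"
  unfolding gdist_def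
  by (rule cInf_lower) (auto simp: bdd_below_def dest: wwalk_nonneg)

lemma gdist_greatest: "wwalk x y c0 \<Longrightarrow> (\<And>c. wwalk x y c \<Longrightarrow> a \<le> c) \<Longrightarrow> a \<le> gdist x y"
  unfolding gdist_def by (rule cInf_greatest) auto

lemma gdist_sym: "gdist x y = gdist y x"
proof -
  have "Collect (wwalk x y) = Collect (wwalk y x)" using wwalk_sym by blast
  then show ?thesis unfolding gdist_def by simp
qed

lemma cv_0 [simp]: "cv p k 0 = Nat (p ^ k)"
  by (simp add: cv_def)

lemma Nat_in_Xv [simp]: "Nat m \<in> Xv"
  by (simp add: Xv_def)

lemma Cyc_in_Xv_iff: "Cyc p k j \<in> Xv \<longleftrightarrow> prime p \<and> 1 \<le> k \<and> 0 < j \<and> j < p * k"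
  by (auto simp: Xv_def)

lemma cv_in_Xv: "prime p \<Longrightarrow> 1 \<le> k \<Longrightarrow> j < p * k \<Longrightarrow> cv p k j \<in> Xv"
  by (auto simp: cv_def Cyc_in_Xv_iff)

lemma Cyc_eq_cv: "0 < j \<Longrightarrow> Cyc p k j = cv p k j"
  by (simp add: cv_def)

lemma wwalk_Nat: "wwalk (Nat m) (Nat m') \<bar>real m - real m'\<bar>"
proof -
  have up: "wwalk (Nat m) (Nat (m + d)) (real d)" for m d
  proof (induction d)
    case 0
    then show ?case using wwalk.refl by simp
  next
    case (Suc d)
    have "edge (Nat (m + d)) (Nat (m + Suc d)) 1"
      unfolding edge_def by (auto intro: edge0.line)
    from wwalk_trans[OF Suc wwalk_edge[OF this]] show ?case by (simp add: add.commute)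
  qed
  show ?thesis
  proof (cases "m \<le> m'")
    case True
    with up[of m "m' - m"] show ?thesis by simp
  next
    case False
    with wwalk_sym[OF up[of m' "m - m'"]] show ?thesis by (simp add: of_nat_diff)
  qed
qed

lemma wwalk_cycle:
  assumes "prime p" "1 \<le> k" "i < p * k" "j < p * k"
  shows "wwalk (cv p k i) (cv p k j) \<bar>real i - real j\<bar>"
proof -
  have up: "wwalk (cv p k i) (cv p k (i + d)) (real d)" if "i + d < p * k" for i d
    using that
  proof (induction d)
    case 0
    then show ?case using wwalk.refl by simp
  next
    case (Suc d)
    have "edge0 (cv p k (i + d)) (cv p k ((i + d + 1) mod (p * k))) 1"
      using Suc.prems assms(1,2) by (intro edge0.cyc) auto
    then have "edge (cv p k (i + d)) (cv p k (i + Suc d)) 1"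
      using Suc.prems unfolding edge_def by simp
    from wwalk_trans[OF Suc.IH wwalk_edge[OF this]] Suc.prems show ?case
      by (simp add: add.commute)
  qed
  show ?thesis
  proof (cases "i \<le> j")
    case True
    with up[of i "j - i"] assms show ?thesis by simp
  next
    case False
    with wwalk_sym[OF up[of j "i - j"]] assms show ?thesis by (simp add: of_nat_diff)
  qed
qed

lemma wwalk_chord:
  "prime p \<Longrightarrow> 1 \<le> k \<Longrightarrow> i < p * k \<Longrightarrow> j < p * k \<Longrightarrow> i \<noteq> j \<Longrightarrow> wwalk (cv p k i) (cv p k j) (real p)"
  by (intro wwalk_edge) (auto simp: edge_def intro: edge0.compl)

lemma wwalk_to_origin: "x \<in> Xv \<Longrightarrow> \<exists>c. wwalk x (Nat 0) c"
proof (induction x)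
  case (Nat m)
  then show ?case using wwalk_Nat by blast
next
  case (Cyc p k j)
  then have "prime p" "1 \<le> k" "0 < j" "j < p * k" by (auto simp: Cyc_in_Xv_iff)
  then have "wwalk (Cyc p k j) (Nat (p ^ k)) \<bar>real j - 0\<bar>"
    using wwalk_cycle[of p k j 0] prime_gt_0_nat by (simp add: Cyc_eq_cv)
  from wwalk_trans[OF this wwalk_Nat] show ?case by blast
qed

lemma wwalk_exists: "x \<in> Xv \<Longrightarrow> y \<in> Xv \<Longrightarrow> \<exists>c. wwalk x y c"
proof -
  assume "x \<in> Xv" "y \<in> Xv"
  then obtain a b where "wwalk x (Nat 0) a" "wwalk y (Nat 0) b" using wwalk_to_origin by meson
  from wwalk_trans[OF this(1) wwalk_sym[OF this(2)]] show ?thesis ..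
qed

lemma gdist_triangle:
  assumes "x \<in> Xv" "y \<in> Xv" "z \<in> Xv"
  shows "gdist x z \<le> gdist x y + gdist y z"
proof -
  obtain a0 b0 where a0: "wwalk x y a0" and b0: "wwalk y z b0"
    using wwalk_exists[OF assms(1,2)] wwalk_exists[OF assms(2,3)] by blast
  have "gdist x z - b \<le> gdist x y" if b: "wwalk y z b" for b
  proof (rule gdist_greatest[OF a0])
    fix a assume "wwalk x y a"
    from gdist_le[OF wwalk_trans[OF this b]] show "gdist x z - b \<le> a" by simp
  qed
  then have "gdist x z - gdist x y \<le> gdist y z"
    using b0 by (intro gdist_greatest) (auto simp: algebra_simps)
  then show ?thesis by simp
qed

lemma metric_on_gdist: "metric_on Xv gdist"
  unfolding metric_on_def
proof (intro conjI ballI)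
  fix x y assume xy: "x \<in> Xv" "y \<in> Xv"
  obtain c0 where c0: "wwalk x y c0" using wwalk_exists[OF xy] by blast
  show "0 \<le> gdist x y" using gdist_greatest[OF c0 wwalk_nonneg] .
  have "1 \<le> gdist x y" if "x \<noteq> y"
    using c0 by (rule gdist_greatest) (use wwalk_ge_1 that in blast)
  moreover have "gdist x x = 0"
    using gdist_le[OF wwalk.refl] gdist_greatest[OF wwalk.refl wwalk_nonneg] by (simp add: order_antisym)
  ultimately show "gdist x y = 0 \<longleftrightarrow> x = y" by fastforce
  show "gdist x y = gdist y x" by (rule gdist_sym)
next
  fix x y z assume "x \<in> Xv" "y \<in> Xv" "z \<in> Xv"
  then show "gdist x z \<le> gdist x y + gdist y z" by (rule gdist_triangle)
qed

lemma potential_le_gdist: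
  fixes \<phi> :: "vert \<Rightarrow> real"
  assumes lip: "\<And>a b w. edge0 a b w \<Longrightarrow> \<bar>\<phi> a - \<phi> b\<bar> \<le> w" and "x \<in> Xv" "y \<in> Xv"
  shows "\<bar>\<phi> x - \<phi> y\<bar> \<le> gdist x y"
proof -
  have walk_bound: "\<bar>\<phi> x - \<phi> y\<bar> \<le> c" if "wwalk x y c" for x y c
    using that
  proof (induction rule: wwalk.induct)
    case (refl x)
    then show ?case by simp
  next
    case (step x z a y c)
    have "\<bar>\<phi> x - \<phi> z\<bar> \<le> a"
      using step(1) lip[of x z a] lip[of z x a] unfolding edge_def by (auto simp: abs_minus_commute)
    with step.IH show ?case by linarith
  qed
  obtain c0 where "wwalk x y c0" using wwalk_exists[OF assms(2,3)] by blast
  then show ?thesis by (rule gdist_greatest) (rule walk_bound)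
qed

definition foot :: "vert \<Rightarrow> nat" where
  "foot w = (case w of Nat m \<Rightarrow> m | Cyc p k i \<Rightarrow> p ^ k)"

lemma foot_cv [simp]: "foot (cv p k j) = p ^ k"
  by (simp add: cv_def foot_def)

lemma foot_Nat [simp]: "foot (Nat m) = m"
  by (simp add: foot_def)

lemma foot_le_gdist: "x \<in> Xv \<Longrightarrow> y \<in> Xv \<Longrightarrow> \<bar>real (foot x) - real (foot y)\<bar> \<le> gdist x y"
proof (rule potential_le_gdist)
  show "\<bar>real (foot a) - real (foot b)\<bar> \<le> w" if "edge0 a b w" for a b w
    using that by (induction rule: edge0.induct) simp_all
qed

definition cyc_dist :: "nat \<Rightarrow> nat \<Rightarrow> nat \<Rightarrow> nat" where
  "cyc_dist n a b = min (max a b - min a b) (n - (max a b - min a b))"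

lemma cyc_dist_self [simp]: "cyc_dist n a a = 0"
  by (simp add: cyc_dist_def)

lemma cyc_dist_sym: "cyc_dist n a b = cyc_dist n b a"
  by (simp add: cyc_dist_def max.commute min.commute)

lemma cyc_dist_succ:
  assumes "j < n" "i < n"
  shows "cyc_dist n ((j + 1) mod n) i \<le> cyc_dist n j i + 1 \<and> cyc_dist n j i \<le> cyc_dist n ((j + 1) mod n) i + 1"
proof (cases "j + 1 < n")
  case True
  then show ?thesis using assms unfolding cyc_dist_def by (auto simp: min_def max_def)
next
  case False
  then have "Suc j = n" using assms by simp
  then have "j = n - 1" "(j + 1) mod n = 0" by auto
  then show ?thesis using assms unfolding cyc_dist_def by (auto simp: min_def max_def)
qed

text \<open>Vertices off G_p^k get index 0, consistently with cv p k 0 = Nat (p^k).\<close>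
definition cycle_index :: "nat \<Rightarrow> nat \<Rightarrow> vert \<Rightarrow> nat" where
  "cycle_index p k w = (case w of Nat m \<Rightarrow> 0 | Cyc q l i \<Rightarrow> if q = p \<and> l = k then i else 0)"

lemma cycle_index_cv [simp]: "cycle_index p k (cv q l j) = (if q = p \<and> l = k then j else 0)"
  by (auto simp: cycle_index_def cv_def)

lemma cycle_index_Nat [simp]: "cycle_index p k (Nat m) = 0"
  by (simp add: cycle_index_def)

lemma cycle_index_less: "u \<in> Xv \<Longrightarrow> 0 < p * k \<Longrightarrow> cycle_index p k u < p * k"
  by (cases u) (auto simp: cycle_index_def Cyc_in_Xv_iff)

lemma cycle_dist_le_gdist:
  assumes "prime p" "1 \<le> k" "i < p * k" "u \<in> Xv"
  shows "real (min p (cyc_dist (p * k) (cycle_index p k u) i)) \<le> gdist u (cv p k i)"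
proof -
  define \<phi> where "\<phi> w = real (min p (cyc_dist (p * k) (cycle_index p k w) i))" for w
  have "\<bar>\<phi> a - \<phi> b\<bar> \<le> w" if "edge0 a b w" for a b w
    using that
  proof (induction rule: edge0.induct)
    case (cyc q l j)
    show ?case
    proof (cases "q = p \<and> l = k")
      case True
      with cyc cyc_dist_succ[of j "p * k" i] assms(3) show ?thesis
        by (auto simp: \<phi>_def min_def)
    qed (auto simp: \<phi>_def)
  qed (auto simp: \<phi>_def min_def)
  from potential_le_gdist[of \<phi>, OF this assms(4) cv_in_Xv[OF assms(1-3)]] show ?thesis
    by (simp add: \<phi>_def)
qed

lemma gdist_le_1_succ: "gdist (Nat (Suc m)) (Nat m) \<le> 1"
  using gdist_le[OF wwalk_Nat[of "Suc m" m]] by simp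

lemma delta_chain_to_origin: "x \<in> Xv \<Longrightarrow> delta_chain Xv gdist 1 x (Nat 0)"
proof -
  have line: "delta_chain Xv gdist 1 (Nat m) (Nat 0)" for m
  proof (induction m)
    case 0
    then show ?case by (simp add: delta_chain.refl)
  next
    case (Suc m)
    show ?case
      by (rule delta_chain.step[where y = "Nat m"]) (simp_all add: gdist_le_1_succ Suc.IH)
  qed
  have cycle: "delta_chain Xv gdist 1 (cv p k j) (Nat (p ^ k))"
    if "prime p" "1 \<le> k" "j < p * k" for p k j
    using that(3)
  proof (induction j)
    case 0
    then show ?case by (simp add: delta_chain.refl)
  next
    case (Suc j)
    have "gdist (cv p k (Suc j)) (cv p k j) \<le> 1"
      using gdist_le[OF wwalk_cycle[OF that(1,2) Suc.prems, of j]] Suc.prems by simp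
    with Suc show ?case using cv_in_Xv[OF that(1,2)] by (auto intro: delta_chain.step)
  qed
  show "x \<in> Xv \<Longrightarrow> delta_chain Xv gdist 1 x (Nat 0)"
  proof (induction x)
    case (Cyc p k j)
    then have "prime p" "1 \<le> k" "0 < j" "j < p * k" by (auto simp: Cyc_in_Xv_iff)
    then show ?case using cycle line delta_chain_trans by (metis Cyc_eq_cv)
  qed (rule line)
qed

lemma chain_connected_X: "chain_connected Xv gdist 1"
  using metric_onD(2)[OF metric_on_gdist] delta_chain_to_origin by (rule chain_connectedI)

lemma cyc_dist_multiples:
  assumes "0 < p" "1 \<le> t" "t < k" "1 \<le> t'" "t' < k" "t \<noteq> t'"
  shows "p \<le> cyc_dist (p * k) (p * t) (p * t')"
proof -
  have "p \<le> cyc_dist (p * k) (p * a) (p * b)" if "1 \<le> a" "a < b" "b < k" for a b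
  proof -
    have "max (p * a) (p * b) - min (p * a) (p * b) = p * (b - a)"
      using that by (simp add: diff_mult_distrib2)
    moreover have "p * k - p * (b - a) = p * (k - (b - a))" by (simp add: diff_mult_distrib2)
    moreover have "p * 1 \<le> p * (b - a)" "p * 1 \<le> p * (k - (b - a))"
      using that by (intro mult_le_mono2; simp)+
    ultimately show ?thesis unfolding cyc_dist_def by simp
  qed
  from this[of t t'] this[of t' t] assms show ?thesis
    by (cases "t < t'") (auto simp: cyc_dist_sym)
qed

lemma separated_clusters_X:
  "\<exists>s\<ge>s0. \<forall>N. \<exists>c\<in>Xv. \<exists>A\<subseteq>Xv. finite A \<and> N < card A \<and>
     (\<forall>a\<in>A. gdist c a \<le> s) \<and> (\<forall>a\<in>A. \<forall>b\<in>A. a \<noteq> b \<longrightarrow> s \<le> gdist a b)"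
proof -
  obtain p where p: "prime p" "nat \<lceil>s0\<rceil> < p" using bigger_prime by blast
  have p0: "0 < p" using prime_gt_0_nat[OF p(1)] .
  have "\<exists>c\<in>Xv. \<exists>A\<subseteq>Xv. finite A \<and> N < card A \<and>
     (\<forall>a\<in>A. gdist c a \<le> real p) \<and> (\<forall>a\<in>A. \<forall>b\<in>A. a \<noteq> b \<longrightarrow> real p \<le> gdist a b)" for N
  proof (intro bexI exI conjI)
    define k where "k = N + 2"
    define u where "u t = cv p k (p * t)" for t
    have k: "1 \<le> k" by (simp add: k_def)
    have pt: "p * t < p * k" if "t \<in> {1..<k}" for t
      using that p0 by simp
    have u: "p * t < p * k" "u t \<in> Xv" if "t \<in> {1..<k}" for t
      using pt[OF that] cv_in_Xv[OF p(1) k pt[OF that]] by (simp_all add: u_def)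
    have "inj_on u {1..<k}"
      using p0 by (intro inj_onI) (auto simp: u_def cv_def)
    then show "N < card (u ` {1..<k})" by (simp add: card_image k_def)
    show "u ` {1..<k} \<subseteq> Xv" "finite (u ` {1..<k})" using u by auto
    show "\<forall>a\<in>u ` {1..<k}. gdist (Nat (p ^ k)) a \<le> real p"
      using p(1) p0 k u by (auto simp: u_def intro!: gdist_le[OF wwalk_chord[of p k 0, simplified]])
    show "\<forall>a\<in>u ` {1..<k}. \<forall>b\<in>u ` {1..<k}. a \<noteq> b \<longrightarrow> real p \<le> gdist a b"
    proof clarify
      fix t t' assume t: "t \<in> {1..<k}" "t' \<in> {1..<k}" "u t \<noteq> u t'"
      then have "p \<le> cyc_dist (p * k) (p * t) (p * t')"
        using p0 by (intro cyc_dist_multiples) auto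
      moreover have "real (min p (cyc_dist (p * k) (cycle_index p k (u t)) (p * t'))) \<le> gdist (u t) (u t')"
        using cycle_dist_le_gdist[OF p(1) _ u(1)[OF t(2)] u(2)[OF t(1)]] by (simp add: u_def k_def)
      ultimately show "real p \<le> gdist (u t) (u t')" by (simp add: u_def)
    qed
  qed simp
  moreover have "s0 \<le> real p" using p(2) by linarith
  ultimately show ?thesis by blast
qed

section \<open>A coarse labelling of X at scale B\<close>

text \<open>A vertex is labelled (0, b, 0) when it lies within distance B of the vertex of \<nat> in block b
  (all vertices of \<nat>, and of the cycles G_p^k with p \<le> B), and (p, k, c) when it is the vertex
  of G_p^k, p > B, whose index lies in block c.\<close>
definition block_label :: "nat \<Rightarrow> vert \<Rightarrow> nat \<times> nat \<times> nat" where
  "block_label B w = (case w of Nat m \<Rightarrow> (0, m div B, 0)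
      | Cyc p k i \<Rightarrow> if p \<le> B then (0, p ^ k div B, 0) else (p, k, i div B))"

definition label_foot_block :: "nat \<Rightarrow> nat \<times> nat \<times> nat \<Rightarrow> nat" where
  "label_foot_block B l = (case l of (a, b, c) \<Rightarrow> if a = 0 then b else a ^ b div B)"

definition label_cycle_block :: "nat \<times> nat \<times> nat \<Rightarrow> nat \<Rightarrow> nat \<Rightarrow> nat" where
  "label_cycle_block l p k = (case l of (a, b, c) \<Rightarrow> if a = p \<and> b = k then c else 0)"

definition adjacent_blocks :: "nat \<Rightarrow> nat set" where
  "adjacent_blocks b = {b - 1, b, b + 1}"

text \<open>The blocks that can contain an index of the cycle of length n at cycle distance less than B
  from an index in block c: the neighbouring blocks, and the blocks at both ends of the cycle.\<close>
definition cycle_blocks :: "nat \<Rightarrow> nat \<Rightarrow> nat \<Rightarrow> nat set" where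
  "cycle_blocks B n c = {c - 1, c, c + 1, 0, (n - B) div B, (n - 1) div B}"

definition neighbour_labels :: "nat \<Rightarrow> nat \<times> nat \<times> nat \<Rightarrow> (nat \<times> nat \<times> nat) set" where
  "neighbour_labels B l = (\<lambda>b. (0, b, 0)) ` adjacent_blocks (label_foot_block B l) \<union>
     {(p, k, c) | p k c. prime p \<and> 1 \<le> k \<and> p ^ k div B \<in> adjacent_blocks (label_foot_block B l) \<and>
        c \<in> cycle_blocks B (p * k) (label_cycle_block l p k)}"

lemma div_mem_adjacent_blocks:
  assumes "a < b + B" "b < a + B"
  shows "a div B \<in> adjacent_blocks (b div B)"
proof -
  have "a div B \<le> b div B + 1" "b div B \<le> a div B + 1"
    using assms div_le_mono[of _ "_ + B" B] by (auto simp: div_add_self2)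
  then show ?thesis unfolding adjacent_blocks_def by auto
qed

lemma div_mem_cycle_blocks:
  assumes "0 < B" "i < n" "i0 < n" "cyc_dist n i0 i < B"
  shows "i div B \<in> cycle_blocks B n (i0 div B)"
proof -
  define D where "D = max i0 i - min i0 i"
  have cd: "cyc_dist n i0 i = min D (n - D)" by (simp add: cyc_dist_def D_def)
  show ?thesis
  proof (cases "D < B")
    case True
    then have "i div B \<in> adjacent_blocks (i0 div B)"
      by (intro div_mem_adjacent_blocks) (auto simp: D_def)
    then show ?thesis unfolding adjacent_blocks_def cycle_blocks_def by auto
  next
    case False
    then have nD: "n - D < B" using assms(4) unfolding cd by simp
    show ?thesis
    proof (cases "i0 \<le> i")
      case True
      then have "n - B \<le> i" "i \<le> n - 1" using nD assms(2) by (auto simp: D_def)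
      then have "(n - B) div B \<le> i div B" "i div B \<le> (n - 1) div B" by (auto intro: div_le_mono)
      moreover have "(n - 1) div B \<le> (n - B) div B + 1"
        using assms(1,2) div_le_mono[of "n - 1" "n - B + B" B] by (simp add: div_add_self2)
      ultimately have "i div B = (n - B) div B \<or> i div B = (n - 1) div B" by linarith
      then show ?thesis unfolding cycle_blocks_def by auto
    next
      case False
      then have "i < B" using nD assms(3) by (auto simp: D_def)
      then show ?thesis unfolding cycle_blocks_def by auto
    qed
  qed
qed

lemma block_label_cases:
  assumes "w \<in> Xv" "0 < B"
  obtains "block_label B w = (0, foot w div B, 0)" "gdist w (Nat (foot w)) \<le> real B"
  | p k i where "w = cv p k i" "prime p" "1 \<le> k" "0 < i" "i < p * k" "B < p"
      "block_label B w = (p, k, i div B)"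
proof (cases w)
  case (Nat m)
  have "gdist (Nat m) (Nat m) \<le> real B" using gdist_le[OF wwalk.refl, of "Nat m"] by simp
  then show ?thesis using that(1) Nat by (simp add: block_label_def)
next
  case (Cyc p k i)
  with assms have h: "prime p" "1 \<le> k" "0 < i" "i < p * k" by (auto simp: Cyc_in_Xv_iff)
  show ?thesis
  proof (cases "p \<le> B")
    case True
    have "gdist w (Nat (p ^ k)) \<le> real p"
      using gdist_le[OF wwalk_chord[OF h(1,2,4), of 0]] h Cyc prime_gt_0_nat by (simp add: Cyc_eq_cv)
    with True Cyc that(1) show ?thesis by (simp add: block_label_def foot_def)
  next
    case False
    with Cyc h that(2)[of p k i] show ?thesis by (simp add: block_label_def cv_def)
  qed
qed

lemma label_foot_block_block_label:
  "w \<in> Xv \<Longrightarrow> 0 < B \<Longrightarrow> label_foot_block B (block_label B w) = foot w div B"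
  by (erule block_label_cases) (auto simp: label_foot_block_def)

lemma label_cycle_block_block_label:
  "u \<in> Xv \<Longrightarrow> B < p \<Longrightarrow> label_cycle_block (block_label B u) p k = cycle_index p k u div B"
  by (cases u) (auto simp: block_label_def label_cycle_block_def cycle_index_def)

lemma block_label_mem_neighbour_labels:
  assumes "u \<in> Xv" "v \<in> Xv" "0 < B" "gdist u v < real B"
  shows "block_label B v \<in> neighbour_labels B (block_label B u)"
proof -
  have "\<bar>real (foot u) - real (foot v)\<bar> < real B" using foot_le_gdist[OF assms(1,2)] assms(4) by linarith
  then have foot: "foot v div B \<in> adjacent_blocks (label_foot_block B (block_label B u))"
    using label_foot_block_block_label[OF assms(1,3)] by (auto intro: div_mem_adjacent_blocks)
  from assms(2,3) show ?thesis
  proof (cases rule: block_label_cases)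
    case 1
    then show ?thesis using foot unfolding neighbour_labels_def by auto
  next
    case (2 p k i)
    have "real (min p (cyc_dist (p * k) (cycle_index p k u) i)) < real B"
      using cycle_dist_le_gdist[OF 2(2,3,5) assms(1)] assms(4) 2(1) by simp
    then have "cyc_dist (p * k) (cycle_index p k u) i < B" using 2(6) by (auto simp: min_def split: if_splits)
    then have "i div B \<in> cycle_blocks B (p * k) (label_cycle_block (block_label B u) p k)"
      using div_mem_cycle_blocks[OF assms(3) 2(5) cycle_index_less[OF assms(1)]] 2
      by (simp add: label_cycle_block_block_label[OF assms(1) 2(6)])
    then show ?thesis using foot 2 unfolding neighbour_labels_def by auto
  qed
qed

lemma card_adjacent_blocks: "card (adjacent_blocks b) \<le> 3"
  using card_length[of "[b - 1, b, b + 1]"] by (simp add: adjacent_blocks_def)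

lemma card_cycle_blocks: "card (cycle_blocks B n c) \<le> 6"
  using card_length[of "[c - 1, c, c + 1, 0, (n - B) div B, (n - 1) div B]"]
  by (simp add: cycle_blocks_def)

lemma card_neighbour_labels:
  assumes "0 < B"
  shows "finite (neighbour_labels B l) \<and> card (neighbour_labels B l) \<le> 18 * B + 3"
proof -
  define b where "b = label_foot_block B l"
  define bs where "bs = adjacent_blocks b"
  define Q where "Q = {(p, k). prime p \<and> 1 \<le> k \<and> p ^ k div B \<in> bs}"
  define A where "A = (\<lambda>b. (0::nat, b, 0::nat)) ` bs"
  define C where "C = (\<Union>(p, k)\<in>Q. (\<lambda>c. (p, k, c)) ` cycle_blocks B (p * k) (label_cycle_block l p k))"
  have "finite bs" by (simp add: bs_def adjacent_blocks_def)
  then have A: "finite A" "card A \<le> 3"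
    unfolding A_def using order_trans[OF card_image_le card_adjacent_blocks] by (auto simp: bs_def)
  have sub: "{x. x div B \<in> bs} \<subseteq> {(b - 1) * B ..< (b + 2) * B}"
  proof
    fix x assume "x \<in> {x. x div B \<in> bs}"
    then have "b - 1 \<le> x div B" "x div B < b + 2" by (auto simp: bs_def adjacent_blocks_def)
    then show "x \<in> {(b - 1) * B ..< (b + 2) * B}"
      by (simp add: less_eq_div_iff_mult_less_eq[OF assms] div_less_iff_less_mult[OF assms])
  qed
  have "card {(b - 1) * B ..< (b + 2) * B} = ((b + 2) - (b - 1)) * B"
    by (simp add: diff_mult_distrib)
  also have "\<dots> \<le> 3 * B" by (intro mult_le_mono1) linarith
  finally have "card {(b - 1) * B ..< (b + 2) * B} \<le> 3 * B" .
  then have pw: "finite {x. x div B \<in> bs}" "card {x. x div B \<in> bs} \<le> 3 * B"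
    using finite_subset[OF sub] card_mono[OF _ sub] by auto
  have inj: "inj_on (\<lambda>(p, k). p ^ k) Q"
  proof (rule inj_onI, clarify)
    fix p k p' k' assume "(p, k) \<in> Q" "(p', k') \<in> Q" "p ^ k = p' ^ k'"
    then show "p = p' \<and> k = k'" using prime_power_inj'[of p p' k k'] by (simp add: Q_def)
  qed
  have img: "(\<lambda>(p, k). p ^ k) ` Q \<subseteq> {x. x div B \<in> bs}" by (auto simp: Q_def)
  have Q: "finite Q" using finite_imageD[OF finite_subset[OF img pw(1)] inj] .
  have "card Q = card ((\<lambda>(p, k). p ^ k) ` Q)" by (rule card_image[OF inj, symmetric])
  also have "\<dots> \<le> 3 * B" using card_mono[OF pw(1) img] pw(2) by linarith
  finally have cQ: "card Q \<le> 3 * B" .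
  have "card C \<le> (\<Sum>(p, k)\<in>Q. card ((\<lambda>c. (p, k, c)) ` cycle_blocks B (p * k) (label_cycle_block l p k)))"
    unfolding C_def by (rule order_trans[OF card_UN_le[OF Q]]) (simp add: case_prod_unfold)
  also have "\<dots> \<le> (\<Sum>_\<in>Q. 6)"
  proof (rule sum_mono, clarify)
    fix p k
    show "card ((\<lambda>c. (p, k, c)) ` cycle_blocks B (p * k) (label_cycle_block l p k)) \<le> 6"
      by (rule order_trans[OF card_image_le card_cycle_blocks]) (simp add: cycle_blocks_def)
  qed
  finally have cC: "card C \<le> 18 * B" using cQ by simp
  have "finite C" unfolding C_def using Q by (intro finite_UN_I) (auto simp: cycle_blocks_def)
  then have fin: "finite (A \<union> C)" using A(1) by simp
  have sub: "neighbour_labels B l \<subseteq> A \<union> C"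
  proof
    fix x assume "x \<in> neighbour_labels B l"
    then consider (foot) b' where "b' \<in> bs" "x = (0, b', 0)"
      | (cycle) p k c where "x = (p, k, c)" "prime p" "1 \<le> k" "p ^ k div B \<in> bs"
          "c \<in> cycle_blocks B (p * k) (label_cycle_block l p k)"
      unfolding neighbour_labels_def bs_def b_def by blast
    then show "x \<in> A \<union> C"
    proof cases
      case foot
      then show ?thesis by (simp add: A_def)
    next
      case cycle
      then have "(p, k) \<in> Q" by (simp add: Q_def)
      with cycle show ?thesis unfolding C_def by blast
    qed
  qed
  have "card (A \<union> C) \<le> 18 * B + 3" using card_Un_le[of A C] A(2) cC by linarith
  then show ?thesis using finite_subset[OF sub fin] card_mono[OF fin sub] by linarith
qed

lemma abs_diff_less_of_div_eq:
  fixes a b B :: nat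
  assumes "0 < B" "a div B = b div B"
  shows "\<bar>real a - real b\<bar> < real B"
proof -
  have "real a = real (b div B * B) + real (a mod B)"
    using div_mult_mod_eq[of a B] assms(2) by (metis of_nat_add)
  moreover have "real b = real (b div B * B) + real (b mod B)"
    using div_mult_mod_eq[of b B] by (metis of_nat_add)
  moreover have "real (a mod B) < real B" "real (b mod B) < real B" using assms(1) by simp_all
  ultimately show ?thesis by linarith
qed

lemma gdist_le_of_block_label_eq:
  assumes u: "u \<in> Xv" and v: "v \<in> Xv" and "0 < B" and eq: "block_label B u = block_label B v"
  shows "gdist u v \<le> 3 * real B"
proof -
  note close = abs_diff_less_of_div_eq[OF \<open>0 < B\<close>]
  from u \<open>0 < B\<close> show ?thesis
  proof (cases rule: block_label_cases)
    case u_lab: 1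
    from v \<open>0 < B\<close> show ?thesis
    proof (cases rule: block_label_cases)
      case v_lab: 1
      then have "foot u div B = foot v div B" using u_lab eq by simp
      then have "gdist (Nat (foot u)) (Nat (foot v)) \<le> real B"
        using gdist_le[OF wwalk_Nat] close by (meson less_imp_le order_trans)
      moreover have "gdist u v \<le> gdist u (Nat (foot u)) + gdist (Nat (foot u)) (Nat (foot v)) + gdist (Nat (foot v)) v"
        using gdist_triangle[OF u Nat_in_Xv[of "foot u"] v]
          gdist_triangle[OF Nat_in_Xv[of "foot u"] Nat_in_Xv[of "foot v"] v] by linarith
      ultimately show ?thesis using u_lab v_lab gdist_sym[of v "Nat (foot v)"] by linarith
    next
      case (2 p k i)
      then show ?thesis using u_lab eq by simp
    qed
  next
    case u_lab: (2 p k i)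
    from v \<open>0 < B\<close> show ?thesis
    proof (cases rule: block_label_cases)
      case 1
      then show ?thesis using u_lab eq by simp
    next
      case v_lab: (2 p' k' j)
      then have "p' = p" "k' = k" "i div B = j div B" using u_lab eq by auto
      then have "gdist u v \<le> \<bar>real i - real j\<bar>"
        using gdist_le[OF wwalk_cycle[OF u_lab(2,3,5), of j]] u_lab v_lab by simp
      then show ?thesis using close[OF \<open>i div B = j div B\<close>] by linarith
    qed
  qed
qed

section \<open>The coarse entropy of X\<close>

lemma power_div_le_exp:
  fixes M :: real
  assumes "1 \<le> M" "0 < L" "ln M / real L \<le> c"
  shows "M ^ (n div L) \<le> exp (real n * c)"
proof -
  have "M ^ (n div L) = exp (real (n div L) * ln M)"
    using assms(1) by (simp add: exp_of_nat_mult)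
  also have "real (n div L) * ln M \<le> real n / real L * ln M"
    using assms(1) by (intro mult_right_mono of_nat_div_le_of_nat) auto
  also have "\<dots> \<le> real n * c"
    using assms(3) mult_left_mono[OF assms(3), of "real n"] by (simp add: field_simps)
  finally show ?thesis by simp
qed

lemma sep_count_X_le:
  assumes "1 \<le> \<delta>" "20 + 20 * \<delta> \<le> R"
  shows "sep_count Xv gdist n R \<delta> x0 \<le> ereal (exp (real n * (10 * \<delta> * ln (4 * R) / R)))"
proof -
  define B where "B = nat \<lfloor>R / 5\<rfloor>"
  define L where "L = nat \<lceil>R / (10 * \<delta>)\<rceil>"
  have B: "R / 5 - 1 < real B" "real B \<le> R / 5"
    using assms unfolding B_def by linarith+
  have "0 < R / (10 * \<delta>)" using assms by simp
  then have "real L = of_int \<lceil>R / (10 * \<delta>)\<rceil>" unfolding L_def by simp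
  then have L: "R / (10 * \<delta>) \<le> real L" "real L \<le> R / (10 * \<delta>) + 1"
    by simp_all
  then have "0 < real B" "0 < real L" using B \<open>0 < R / (10 * \<delta>)\<close> assms by linarith+
  then have "0 < B" "0 < L" by simp_all
  have "(R / (10 * \<delta>) + 1) * \<delta> = R / 10 + \<delta>" using assms by (simp add: field_simps)
  then have "real L * \<delta> \<le> R / 10 + \<delta>"
    using mult_right_mono[OF L(2), of \<delta>] assms by linarith
  then have LB: "real L * \<delta> < real B" using B assms by linarith
  have "sep_count Xv gdist n R \<delta> x0 \<le> ereal (real ((18 * B + 3) ^ (n div L)))"
  proof (rule sep_count_le_of_labelling[where D = "3 * real B" and lab = "block_label B"
        and N = "neighbour_labels B", OF metric_on_gdist _ \<open>0 < L\<close> LB])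
    show "0 \<le> \<delta>" "3 * real B + 2 * real B \<le> R" using assms B by linarith+
    show "gdist x y \<le> 3 * real B" if "x \<in> Xv" "y \<in> Xv" "block_label B x = block_label B y" for x y
      using gdist_le_of_block_label_eq[OF that(1,2) \<open>0 < B\<close> that(3)] .
    show "block_label B y \<in> neighbour_labels B (block_label B x)"
      if "x \<in> Xv" "y \<in> Xv" "gdist x y < real B" for x y
      using block_label_mem_neighbour_labels[OF that(1,2) \<open>0 < B\<close> that(3)] .
    show "finite (neighbour_labels B l)" "card (neighbour_labels B l) \<le> 18 * B + 3" for l
      using card_neighbour_labels[OF \<open>0 < B\<close>] by auto
  qed
  also have "real ((18 * B + 3) ^ (n div L)) \<le> exp (real n * (10 * \<delta> * ln (4 * R) / R))"
  proof -
    have "ln (real (18 * B + 3)) \<le> ln (4 * R)" using B assms by (intro ln_mono) auto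
    also have "\<dots> \<le> real L * (10 * \<delta> * ln (4 * R) / R)"
      using mult_right_mono[OF L(1), of "10 * \<delta> * ln (4 * R) / R"] assms by (simp add: field_simps)
    finally have "ln (real (18 * B + 3)) / real L \<le> 10 * \<delta> * ln (4 * R) / R"
      using \<open>0 < L\<close> by (simp add: divide_le_eq mult.commute)
    from power_div_le_exp[OF _ \<open>0 < L\<close> this] show ?thesis by simp
  qed
  finally show ?thesis by simp
qed

lemma coarse_entropy_X: "x0 \<in> Xv \<Longrightarrow> coarse_entropy Xv gdist x0 = 0"
proof (rule coarse_entropy_eq_0I[OF metric_on_gdist, where g = "\<lambda>\<delta> R. 10 * \<delta> * ln (4 * R) / R"])
  fix \<delta> :: real assume "1 \<le> \<delta>"
  show "eventually (\<lambda>R. \<forall>n. sep_count Xv gdist n R \<delta> x0 \<le> ereal (exp (real n * (10 * \<delta> * ln (4 * R) / R)))) at_top"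
    using eventually_ge_at_top[of "20 + 20 * \<delta>"] by eventually_elim (use sep_count_X_le \<open>1 \<le> \<delta>\<close> in blast)
  show "((\<lambda>R. 10 * \<delta> * ln (4 * R) / R) \<longlongrightarrow> 0) at_top" by real_asymp
qed

theorem mainTheorem11:
  shows "chain_connected Xv gdist 1 \<and>
    \<not> (\<exists>(Y :: 'b set) (e :: 'b \<Rightarrow> 'b \<Rightarrow> real) (f :: vert \<Rightarrow> 'b).
          metric_on Y e \<and> bounded_geometry Y e \<and> coarse_equivalence Xv gdist Y e f) \<and>
    (\<forall>x0\<in>Xv. coarse_entropy Xv gdist x0 = 0)"
  using chain_connected_X coarse_entropy_X
    not_coarse_equivalence_bounded_geometry[OF metric_on_gdist _ _ separated_clusters_X]
  by blast

end
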